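(* Let $G=(V,E)$ be a graph, $\prec$ a strict partial order on $P_f(\mathbb{N}^+)$, and $\sigma$ an ordering of $V$. Then there exists an ordering $\tau$ of $V$ with $\sigma=\mathrm{TBLS}(G,\prec,\tau)$ if and only if $\sigma=\mathrm{TBLS}(G,\prec,\sigma)$.
   Context: Let $G=(V,E)$ be a finite undirected graph with $n$ vertices. An ordering of $V$ is a bijection $\sigma:\{1,\dots,n\}\to V$; $\sigma(i)$ is the $i$th vertex. $P_f(\mathbb{N}^+)$ is the set of finite subsets of the positive integers. Given a strict partial order $\prec$ on $P_f(\mathbb{N}^+)$ and an ordering $\tau$ of $V$, the Tie-Breaking Label Search $\mathrm{TBLS}(G,\prec,\tau)$ is the procedure: set $label(v)=\emptyset$ for every $v$; for $i=1,\dots,n$: let Eligible be the set of unnumbered vertices $x$ such that there is no unnumbered vertex $y$ with $label(x)\prec label(y)$; let $v$ be the first vertex of Eligible in the ordering $\tau$; set $\sigma(i)=v$ ($v$ becomes numbered); for every unnumbered neighbour $w$ of $v$ replace $label(w)$ by $label(w)\cup\{i\}$. The output is $\sigma$. *)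

theory Defs
  imports Main
begin

definition graph :: "'a set \<Rightarrow> ('a \<Rightarrow> 'a \<Rightarrow> bool) \<Rightarrow> bool" where
  "graph V E \<longleftrightarrow> finite V \<and> (\<forall>x y. E x y \<longrightarrow> x \<in> V \<and> y \<in> V)
      \<and> (\<forall>x y. E x y \<longrightarrow> E y x) \<and> (\<forall>x. \<not> E x x)"

definition ordering_of :: "'a set \<Rightarrow> (nat \<Rightarrow> 'a) \<Rightarrow> bool" where
  "ordering_of V \<sigma> \<longleftrightarrow> bij_betw \<sigma> {1..card V} V"

definition Pf_pos :: "nat set set" where
  "Pf_pos = {S. finite S \<and> 0 \<notin> S}"

definition strict_po_on :: "'b set \<Rightarrow> ('b \<Rightarrow> 'b \<Rightarrow> bool) \<Rightarrow> bool" where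
  "strict_po_on A r \<longleftrightarrow> (\<forall>x\<in>A. \<not> r x x)
      \<and> (\<forall>x\<in>A. \<forall>y\<in>A. \<forall>z\<in>A. r x y \<longrightarrow> r y z \<longrightarrow> r x z)"

text \<open>Run of TBLS: the list of numbered vertices after some steps, in order
(element k of the list is sigma(k+1)).\<close>
definition tbls_label :: "('a \<Rightarrow> 'a \<Rightarrow> bool) \<Rightarrow> 'a list \<Rightarrow> 'a \<Rightarrow> nat set" where
  "tbls_label E vs w = {i. 1 \<le> i \<and> i \<le> length vs \<and> E (vs ! (i - 1)) w}"

definition tbls_eligible ::
  "'a set \<Rightarrow> ('a \<Rightarrow> 'a \<Rightarrow> bool) \<Rightarrow> (nat set \<Rightarrow> nat set \<Rightarrow> bool) \<Rightarrow> 'a list \<Rightarrow> 'a set" where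
  "tbls_eligible V E prec vs =
     {x \<in> V - set vs. \<not> (\<exists>y \<in> V - set vs. prec (tbls_label E vs x) (tbls_label E vs y))}"

definition first_in :: "'a set \<Rightarrow> (nat \<Rightarrow> 'a) \<Rightarrow> 'a set \<Rightarrow> 'a" where
  "first_in V \<tau> S = \<tau> (LEAST k. k \<in> {1..card V} \<and> \<tau> k \<in> S)"

fun tbls_run ::
  "'a set \<Rightarrow> ('a \<Rightarrow> 'a \<Rightarrow> bool) \<Rightarrow> (nat set \<Rightarrow> nat set \<Rightarrow> bool) \<Rightarrow> (nat \<Rightarrow> 'a) \<Rightarrow> nat \<Rightarrow> 'a list" where
  "tbls_run V E prec \<tau> 0 = []"
| "tbls_run V E prec \<tau> (Suc i) =
     (let vs = tbls_run V E prec \<tau> i in vs @ [first_in V \<tau> (tbls_eligible V E prec vs)])"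

definition TBLS ::
  "'a set \<Rightarrow> ('a \<Rightarrow> 'a \<Rightarrow> bool) \<Rightarrow> (nat set \<Rightarrow> nat set \<Rightarrow> bool) \<Rightarrow> (nat \<Rightarrow> 'a) \<Rightarrow> nat \<Rightarrow> 'a" where
  "TBLS V E prec \<tau> i = tbls_run V E prec \<tau> (card V) ! (i - 1)"

end

theory Submission
  imports Defs
begin

text \<open>Each step of TBLS numbers an eligible vertex, whatever the tie-breaking order \<open>\<tau>\<close>.
  Conversely, if every \<open>\<sigma>(k+1)\<close> is eligible once \<open>\<sigma>(1), \<dots>, \<sigma>(k)\<close> are numbered, then
  tie-breaking by \<open>\<sigma>\<close> itself picks \<open>\<sigma>(k+1)\<close> at step \<open>k+1\<close>: it is eligible, and all
  vertices earlier in \<open>\<sigma>\<close> are already numbered. Since the eligible set depends only on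
  the vertices numbered so far, an output \<open>\<sigma> = TBLS(G,\<prec>,\<tau>)\<close> has this property, so
  \<open>\<sigma> = TBLS(G,\<prec>,\<sigma>)\<close>.\<close>

lemma strict_po_on_finite_has_maximal:
  assumes "strict_po_on P r" "finite A" "A \<noteq> {}" "A \<subseteq> P"
  shows "\<exists>x\<in>A. \<forall>y\<in>A. \<not> r x y"
proof -
  define R where "R = {(y, x). x \<in> A \<and> y \<in> A \<and> r x y}"
  have "trans R" "irrefl R"
    using assms(1,4) unfolding R_def strict_po_on_def trans_def irrefl_def by blast+
  then have "acyclic R"
    by (simp add: acyclic_irrefl)
  moreover have "finite R"
    using assms(2) by (intro finite_subset[of R "A \<times> A"]) (auto simp: R_def)
  ultimately have "wf R"
    by (rule finite_acyclic_wf[rotated])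
  then obtain x where "x \<in> A" "\<forall>y. (y, x) \<in> R \<longrightarrow> y \<notin> A"
    using assms(3) unfolding wf_eq_minimal by blast
  then show ?thesis
    unfolding R_def by blast
qed

lemma length_tbls_run [simp]: "length (tbls_run V E prec \<tau> k) = k"
  by (induction k) (auto simp: Let_def)

lemma tbls_run_prefix:
  "k \<le> m \<Longrightarrow> tbls_run V E prec \<tau> k = take k (tbls_run V E prec \<tau> m)"
proof (induction m)
  case (Suc m)
  then show ?case
    by (cases "k = Suc m") (simp_all add: Let_def)
qed simp

lemma TBLS_eq_iff_tbls_run:
  "(\<forall>i\<in>{1..card V}. \<sigma> i = TBLS V E prec \<tau> i)
     \<longleftrightarrow> tbls_run V E prec \<tau> (card V) = map \<sigma> [1..<Suc (card V)]"
proof -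
  have "{1..card V} = Suc ` {..<card V}"
    by (simp add: lessThan_atLeast0 atLeastLessThanSuc_atLeastAtMost)
  then have "(\<forall>i\<in>{1..card V}. \<sigma> i = TBLS V E prec \<tau> i)
      \<longleftrightarrow> (\<forall>j<card V. \<sigma> (Suc j) = tbls_run V E prec \<tau> (card V) ! j)"
    by (auto simp: TBLS_def)
  also have "\<dots> \<longleftrightarrow> tbls_run V E prec \<tau> (card V) = map \<sigma> [1..<Suc (card V)]"
    by (auto simp: list_eq_iff_nth_eq nth_map_upt simp del: upt_Suc)
  finally show ?thesis .
qed

lemma tbls_eligible_subset: "tbls_eligible V E prec vs \<subseteq> V - set vs"
  unfolding tbls_eligible_def by auto

lemma tbls_label_in_Pf_pos: "tbls_label E vs w \<in> Pf_pos"
  unfolding Pf_pos_def tbls_label_def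
  by (auto intro: finite_subset[of _ "{1..length vs}"])

lemma tbls_eligible_nonempty:
  assumes "strict_po_on Pf_pos prec" "finite V" "\<not> V \<subseteq> set vs"
  shows "tbls_eligible V E prec vs \<noteq> {}"
proof -
  let ?labels = "tbls_label E vs ` (V - set vs)"
  have "finite ?labels" "?labels \<noteq> {}" "?labels \<subseteq> Pf_pos"
    using assms(2,3) tbls_label_in_Pf_pos by auto
  then obtain a where "a \<in> ?labels" "\<forall>b\<in>?labels. \<not> prec a b"
    using strict_po_on_finite_has_maximal[OF assms(1)] by meson
  then show ?thesis
    unfolding tbls_eligible_def by blast
qed

lemma first_in_mem:
  assumes "ordering_of V \<tau>" "S \<subseteq> V" "S \<noteq> {}"
  shows "first_in V \<tau> S \<in> S"
proof -
  have "\<tau> ` {1..card V} = V"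
    using assms(1) unfolding ordering_of_def by (rule bij_betw_imp_surj_on)
  moreover obtain s where "s \<in> S"
    using assms(3) by blast
  ultimately obtain k where "k \<in> {1..card V}" "\<tau> k = s"
    using assms(2) by (metis imageE subsetD)
  with \<open>s \<in> S\<close> have "\<exists>k. k \<in> {1..card V} \<and> \<tau> k \<in> S"
    by blast
  then show ?thesis
    unfolding first_in_def by (rule LeastI2_ex) blast
qed

lemma first_in_eqI:
  assumes "Suc k \<le> card V" "\<tau> (Suc k) \<in> S" "S \<inter> \<tau> ` {1..k} = {}"
  shows "first_in V \<tau> S = \<tau> (Suc k)"
proof -
  have "(LEAST j. j \<in> {1..card V} \<and> \<tau> j \<in> S) = Suc k"
  proof (rule Least_equality)
    fix j assume "j \<in> {1..card V} \<and> \<tau> j \<in> S"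
    then show "Suc k \<le> j"
      using assms(3) by (cases "j \<le> k") auto
  qed (use assms(1,2) in simp)
  then show ?thesis
    unfolding first_in_def by simp
qed

lemma tbls_run_step_eligible:
  assumes "strict_po_on Pf_pos prec" "finite V" "ordering_of V \<tau>" "k < card V"
  shows "tbls_run V E prec \<tau> (Suc k) ! k \<in> tbls_eligible V E prec (tbls_run V E prec \<tau> k)"
proof -
  let ?vs = "tbls_run V E prec \<tau> k"
  have "card (set ?vs) < card V"
    using card_length[of ?vs] assms(4) by simp
  then have "\<not> V \<subseteq> set ?vs"
    by (metis card_mono finite_set not_le)
  then have "tbls_eligible V E prec ?vs \<noteq> {}"
    using tbls_eligible_nonempty assms(1,2) by blast
  moreover have "tbls_eligible V E prec ?vs \<subseteq> V"
    using tbls_eligible_subset[of V E prec ?vs] by blast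
  ultimately have "first_in V \<tau> (tbls_eligible V E prec ?vs) \<in> tbls_eligible V E prec ?vs"
    using first_in_mem[OF assms(3)] by blast
  then show ?thesis
    by (simp add: Let_def nth_append)
qed

lemma tbls_run_self:
  assumes eligible: "\<And>k. k < card V \<Longrightarrow>
      \<sigma> (Suc k) \<in> tbls_eligible V E prec (map \<sigma> [1..<Suc k])"
  shows "k \<le> card V \<Longrightarrow> tbls_run V E prec \<sigma> k = map \<sigma> [1..<Suc k]"
proof (induction k)
  case (Suc k)
  let ?El = "tbls_eligible V E prec (map \<sigma> [1..<Suc k])"
  have "set (map \<sigma> [1..<Suc k]) = \<sigma> ` {1..k}"
    by (simp add: atLeastLessThanSuc_atLeastAtMost del: upt_Suc)
  then have "?El \<inter> \<sigma> ` {1..k} = {}"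
    using tbls_eligible_subset[of V E prec "map \<sigma> [1..<Suc k]"] by blast
  then have "first_in V \<sigma> ?El = \<sigma> (Suc k)"
    using Suc.prems eligible by (intro first_in_eqI) (auto simp del: upt_Suc)
  then show ?case
    using Suc by (simp add: Let_def)
qed simp

theorem theorem2:
  fixes V :: "'a set" and E :: "'a \<Rightarrow> 'a \<Rightarrow> bool"
    and prec :: "nat set \<Rightarrow> nat set \<Rightarrow> bool" and \<sigma> :: "nat \<Rightarrow> 'a"
  assumes "graph V E"
    and "strict_po_on Pf_pos prec"
    and "ordering_of V \<sigma>"
  shows "(\<exists>\<tau>. ordering_of V \<tau> \<and> (\<forall>i\<in>{1..card V}. \<sigma> i = TBLS V E prec \<tau> i))
     \<longleftrightarrow> (\<forall>i\<in>{1..card V}. \<sigma> i = TBLS V E prec \<sigma> i)"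
proof
  assume "\<exists>\<tau>. ordering_of V \<tau> \<and> (\<forall>i\<in>{1..card V}. \<sigma> i = TBLS V E prec \<tau> i)"
  then obtain \<tau> where \<tau>: "ordering_of V \<tau>"
    and run_\<tau>: "tbls_run V E prec \<tau> (card V) = map \<sigma> [1..<Suc (card V)]"
    using TBLS_eq_iff_tbls_run by blast
  have "finite V"
    using assms(1) unfolding graph_def by blast
  have run_\<tau>_prefix: "tbls_run V E prec \<tau> j = map \<sigma> [1..<Suc j]" if "j \<le> card V" for j
    using tbls_run_prefix[of j "card V" V E prec \<tau>] run_\<tau> that
    by (simp add: take_map take_upt del: upt_Suc)
  have "\<sigma> (Suc k) \<in> tbls_eligible V E prec (map \<sigma> [1..<Suc k])" if "k < card V" for k
    using tbls_run_step_eligible[OF assms(2) \<open>finite V\<close> \<tau> that, of E]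
      run_\<tau>_prefix[of k] run_\<tau>_prefix[of "Suc k"] that
    by (simp add: nth_map_upt del: upt_Suc)
  then have "tbls_run V E prec \<sigma> (card V) = map \<sigma> [1..<Suc (card V)]"
    using tbls_run_self by blast
  then show "\<forall>i\<in>{1..card V}. \<sigma> i = TBLS V E prec \<sigma> i"
    using TBLS_eq_iff_tbls_run by blast
qed (use assms(3) in blast)

end
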